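(* Let $M$ be a duplicial module in a pre-additive category $\mathcal A$. Then for every $n\ge0$, $$\pi_n=p_n\circ T_n=T_n\circ p_n .$$ In particular, if $M$ is cyclic ($T_n=1$ for all $n$), then $\pi_n=p_n$.
   Context: Let $\mathcal A$ be a pre-additive category. Let $\Lambda_\infty$ be the category with objects $[n]$, $n\ge0$, where $\Lambda_\infty([m],[n])$ is the set of weakly monotone maps $f:\mathbb Z\to\mathbb Z$ with $f(j+m+1)=f(j)+n+1$ for all $j$ (determined by values on $\{0,\dots,m\}$). Let $\Lambda_+\subset\Lambda_\infty$ be the subcategory of those $f$ with $f(0)\ge0$, and $\Delta\subset\Lambda_+$ those with also $f(m)\le n$. Define $\varepsilon^n_i:[n-1]\to[n]$ ($n\ge1$, $0\le i\le n$) by $\varepsilon^n_i(j)=j$ for $0\le j<i$, $j+1$ for $i\le j\le n-1$; $\eta^n_i:[n+1]\to[n]$ ($0\le i\le n+1$) by $\eta^n_i(j)=j$ for $0\le j\le i$, $j-1$ for $i<j\le n+1$; $\tau_n:[n]\to[n]$, $\tau_n(j)=j+1$ ($=\eta^n_{n+1}\varepsilon^{n+1}_0$). A duplicial module is a functor $M:\Lambda_+^{op}\to\mathcal A$. Write $M_n=M([n])$, $\partial_{n,i}=M(\varepsilon^n_i):M_n\to M_{n-1}$, $s_{n,i}=M(\eta^n_i):M_n\to M_{n+1}$, $t_n=M(\tau_n)=\partial_{n+1,0}s_{n,n+1}$, $T_n=t_n^{n+1}$; $M$ is cyclic if $T_n=1$ for all $n$. Convention: $M_{-1}=0$, maps to/from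 it are $0$. Define $p_n=(1-s_{n-1,0}\partial_{n,1})(1-s_{n-1,1}\partial_{n,2})\cdots(1-s_{n-1,n-1}\partial_{n,n})$ ($p_0=1$), the Karoubi operator $\kappa_n=(-1)^n(\partial_{n+1,0}s_{n,n+1}-s_{n-1,n}\partial_{n,0})$ and the Dwyer–Kan operator $\pi_n=(-1)^n\partial_{n+1,0}\kappa_{n+1}^n s_{n,n+1}$. *)

theory Defs
  imports Main
begin

text \<open>A category with morphisms of type 'm and objects of type 'o; hom C a b is the
set of morphisms a -> b; cmp C g f is the composite g o f (f first).\<close>

record ('o, 'm) preadd_cat =
  hom :: "'o \<Rightarrow> 'o \<Rightarrow> 'm set"
  cmp :: "'m \<Rightarrow> 'm \<Rightarrow> 'm"
  idm :: "'o \<Rightarrow> 'm"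
  zer :: "'o \<Rightarrow> 'o \<Rightarrow> 'm"
  pls :: "'m \<Rightarrow> 'm \<Rightarrow> 'm"
  neg :: "'m \<Rightarrow> 'm"

definition preadditive :: "('o, 'm) preadd_cat \<Rightarrow> bool" where
  "preadditive C \<longleftrightarrow>
     (\<forall>a b c f g. f \<in> hom C a b \<and> g \<in> hom C b c \<longrightarrow> cmp C g f \<in> hom C a c) \<and>
     (\<forall>a b c d f g h. f \<in> hom C a b \<and> g \<in> hom C b c \<and> h \<in> hom C c d \<longrightarrow>
        cmp C h (cmp C g f) = cmp C (cmp C h g) f) \<and>
     (\<forall>a. idm C a \<in> hom C a a) \<and>
     (\<forall>a b f. f \<in> hom C a b \<longrightarrow> cmp C (idm C b) f = f \<and> cmp C f (idm C a) = f) \<and>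
     (\<forall>a b. zer C a b \<in> hom C a b) \<and>
     (\<forall>a b f g. f \<in> hom C a b \<and> g \<in> hom C a b \<longrightarrow>
        pls C f g \<in> hom C a b \<and> pls C f g = pls C g f) \<and>
     (\<forall>a b f g h. f \<in> hom C a b \<and> g \<in> hom C a b \<and> h \<in> hom C a b \<longrightarrow>
        pls C (pls C f g) h = pls C f (pls C g h)) \<and>
     (\<forall>a b f. f \<in> hom C a b \<longrightarrow>
        pls C f (zer C a b) = f \<and> neg C f \<in> hom C a b \<and> pls C f (neg C f) = zer C a b) \<and>
     (\<forall>a b c f g g'. f \<in> hom C a b \<and> g \<in> hom C b c \<and> g' \<in> hom C b c \<longrightarrow>
        cmp C (pls C g g') f = pls C (cmp C g f) (cmp C g' f)) \<and>
     (\<forall>a b c f f' g. f \<in> hom C a b \<and> f' \<in> hom C a b \<and> g \<in> hom C b c \<longrightarrow>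
        cmp C g (pls C f f') = pls C (cmp C g f) (cmp C g f'))"

definition mns :: "('o, 'm) preadd_cat \<Rightarrow> 'm \<Rightarrow> 'm \<Rightarrow> 'm" where
  "mns C f g = pls C f (neg C g)"

definition sgnm :: "('o, 'm) preadd_cat \<Rightarrow> nat \<Rightarrow> 'm \<Rightarrow> 'm" where
  "sgnm C n f = (if even n then f else neg C f)"

definition mpow :: "('o, 'm) preadd_cat \<Rightarrow> 'o \<Rightarrow> nat \<Rightarrow> 'm \<Rightarrow> 'm" where
  "mpow C a k f = (cmp C f ^^ k) (idm C a)"

text \<open>Morphisms [m] -> [n] of Lambda_infinity: weakly monotone f : Z -> Z with
f(j+m+1) = f(j)+n+1; Lambda_+ additionally requires f(0) >= 0.
Composition is composition of functions.\<close>

definition lam_inf :: "nat \<Rightarrow> nat \<Rightarrow> (int \<Rightarrow> int) \<Rightarrow> bool" where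
  "lam_inf m n f \<longleftrightarrow> mono f \<and> (\<forall>j. f (j + int m + 1) = f j + int n + 1)"

definition lam_plus :: "nat \<Rightarrow> nat \<Rightarrow> (int \<Rightarrow> int) \<Rightarrow> bool" where
  "lam_plus m n f \<longleftrightarrow> lam_inf m n f \<and> f 0 \<ge> 0"

text \<open>The unique extension to Z of a map given on {0..m}.\<close>
definition per_ext :: "nat \<Rightarrow> nat \<Rightarrow> (int \<Rightarrow> int) \<Rightarrow> int \<Rightarrow> int" where
  "per_ext m n g j = (j div (int m + 1)) * (int n + 1) + g (j mod (int m + 1))"

definition eps :: "nat \<Rightarrow> nat \<Rightarrow> int \<Rightarrow> int" where
  "eps n i = per_ext (n - 1) n (\<lambda>j. if j < int i then j else j + 1)"

definition eta :: "nat \<Rightarrow> nat \<Rightarrow> int \<Rightarrow> int" where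
  "eta n i = per_ext (n + 1) n (\<lambda>j. if j \<le> int i then j else j - 1)"

definition tau :: "nat \<Rightarrow> int \<Rightarrow> int" where
  "tau n = per_ext n n (\<lambda>j. j + 1)"

text \<open>A duplicial module is a functor M : Lambda_+^op -> C, given by its object map
Ob ([n] |-> M_n) and its morphism map Mor: for f : [m] -> [n] in Lambda_+,
Mor m n f : M_n -> M_m.\<close>

definition duplicial ::
  "('o, 'm) preadd_cat \<Rightarrow> (nat \<Rightarrow> 'o) \<Rightarrow> (nat \<Rightarrow> nat \<Rightarrow> (int \<Rightarrow> int) \<Rightarrow> 'm) \<Rightarrow> bool" where
  "duplicial C Ob Mor \<longleftrightarrow>
     (\<forall>m n f. lam_plus m n f \<longrightarrow> Mor m n f \<in> hom C (Ob n) (Ob m)) \<and>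
     (\<forall>m. Mor m m id = idm C (Ob m)) \<and>
     (\<forall>m n k f g. lam_plus m n f \<and> lam_plus n k g \<longrightarrow>
        Mor m k (g \<circ> f) = cmp C (Mor m n f) (Mor n k g))"

context
  fixes C :: "('o, 'm) preadd_cat"
    and Ob :: "nat \<Rightarrow> 'o"
    and Mor :: "nat \<Rightarrow> nat \<Rightarrow> (int \<Rightarrow> int) \<Rightarrow> 'm"
begin

definition dface :: "nat \<Rightarrow> nat \<Rightarrow> 'm" where
  "dface n i = Mor (n - 1) n (eps n i)"

definition sdeg :: "nat \<Rightarrow> nat \<Rightarrow> 'm" where
  "sdeg n i = Mor (n + 1) n (eta n i)"

definition tcyc :: "nat \<Rightarrow> 'm" where
  "tcyc n = Mor n n (tau n)"

definition Tcyc :: "nat \<Rightarrow> 'm" where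
  "Tcyc n = mpow C (Ob n) (n + 1) (tcyc n)"

definition cyclic :: bool where
  "cyclic \<longleftrightarrow> (\<forall>n. Tcyc n = idm C (Ob n))"

definition pfac :: "nat \<Rightarrow> nat \<Rightarrow> 'm" where
  "pfac n i = mns C (idm C (Ob n)) (cmp C (sdeg (n - 1) i) (dface n (i + 1)))"

definition pop :: "nat \<Rightarrow> 'm" where
  "pop n = foldr (\<lambda>i acc. cmp C (pfac n i) acc) [0..<n] (idm C (Ob n))"

text \<open>Karoubi operator; for n = 0 the term s_{-1,0} d_{0,0} factors through M_{-1} = 0
and is the zero map.\<close>
definition kar :: "nat \<Rightarrow> 'm" where
  "kar n = sgnm C n
     (mns C (cmp C (dface (n + 1) 0) (sdeg n (n + 1)))
            (if n = 0 then zer C (Ob 0) (Ob 0) else cmp C (sdeg (n - 1) n) (dface n 0)))"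

definition dk :: "nat \<Rightarrow> 'm" where
  "dk n = sgnm C n (cmp C (dface (n + 1) 0)
            (cmp C (mpow C (Ob (n + 1)) n (kar (n + 1))) (sdeg n (n + 1))))"

end

end

theory Submission
  imports Defs
begin

text \<open>Expanding by bilinearity of composition, both pi_n and p_n T_n become alternating sums
over the words c in {False, True}^n. The signs of the Karoubi operator cancel, so
pi_n = d_{n+1,0} (s_{n,n+1} d_{n+1,0} - t_{n+1})^n s_{n,n+1}, while p_n is the product of the
factors 1 - s_{n-1,i} d_{n,i+1}; in both sums the term of a word is M applied to a single
morphism of Lambda_+. For every word, the morphism [n] -> [n] occurring in pi_n is the one
occurring in p_n followed by the shift j |-> j + n + 1, whose image under M is T_n; this is
checked on the values at 0, ..., n, which determine a morphism of Lambda_infinity. The shift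
commutes with every endomorphism of [n] in Lambda_infinity, so T_n also commutes with p_n.\<close>

section \<open>Morphisms of Lambda_+\<close>

lemma mono_int_SucI:
  fixes f :: "int \<Rightarrow> 'a::order"
  assumes "\<And>v. f v \<le> f (v + 1)"
  shows "mono f"
proof (rule monoI)
  fix x y :: int
  assume "x \<le> y"
  then obtain d where "y = x + int d"
    using zle_iff_zadd by blast
  moreover have "f (x + int k) \<le> f (x + int (Suc k))" for k
    using assms[of "x + int k"] by (simp add: algebra_simps)
  then have "f (x + int 0) \<le> f (x + int d)"
    by (rule lift_Suc_mono_le) simp
  ultimately show "f x \<le> f y"
    by simp
qed

lemma int_div_mod_decomp:
  fixes v :: int
  obtains q r where "0 \<le> r" "r \<le> int m" "v = r + q * (int m + 1)"
proof
  show "0 \<le> v mod (int m + 1)" "v mod (int m + 1) \<le> int m"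
    using pos_mod_bound[of "int m + 1" v] by simp_all
  show "v = v mod (int m + 1) + v div (int m + 1) * (int m + 1)"
    by (metis add.commute div_mult_mod_eq)
qed

lemma per_ext_div_mod:
  assumes "0 \<le> r" "r \<le> int m"
  shows "per_ext m n g (r + q * (int m + 1)) = q * (int n + 1) + g r"
  using assms by (simp add: per_ext_def)

lemma per_ext_base:
  "0 \<le> j \<Longrightarrow> j \<le> int m \<Longrightarrow> per_ext m n g j = g j"
  using per_ext_div_mod[of j m n g 0] by simp

lemma per_ext_second_period:
  "int m + 1 \<le> j \<Longrightarrow> j \<le> 2 * int m + 1 \<Longrightarrow>
    per_ext m n g j = int n + 1 + g (j - int m - 1)"
  using per_ext_div_mod[of "j - int m - 1" m n g 1] by simp

lemma per_ext_periodic: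
  "per_ext m n g (j + int m + 1) = per_ext m n g j + int n + 1"
proof -
  have "(j + int m + 1) div (int m + 1) = j div (int m + 1) + 1"
    "(j + int m + 1) mod (int m + 1) = j mod (int m + 1)"
    using div_add_self2[of "int m + 1" j] mod_add_self2[of j "int m + 1"] by (simp_all add: add.assoc)
  then show ?thesis
    by (simp add: per_ext_def algebra_simps)
qed

lemma per_ext_le_succ:
  assumes "\<And>j. 0 \<le> j \<Longrightarrow> j < int m \<Longrightarrow> g j \<le> g (j + 1)"
    and "g (int m) \<le> g 0 + int n + 1"
  shows "per_ext m n g v \<le> per_ext m n g (v + 1)"
proof -
  obtain q r where r: "0 \<le> r" "r \<le> int m" and v: "v = r + q * (int m + 1)"
    by (rule int_div_mod_decomp)
  have v0: "per_ext m n g v = q * (int n + 1) + g r"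
    unfolding v using r by (rule per_ext_div_mod)
  show ?thesis
  proof (cases "r < int m")
    case True
    have "v + 1 = (r + 1) + q * (int m + 1)"
      using v by simp
    also have "per_ext m n g \<dots> = q * (int n + 1) + g (r + 1)"
      using r True by (intro per_ext_div_mod) auto
    finally have "per_ext m n g (v + 1) = q * (int n + 1) + g (r + 1)" .
    then show ?thesis
      using v0 r True assms(1)[of r] by simp
  next
    case False
    then have "r = int m"
      using r by simp
    then have "v + 1 = 0 + (q + 1) * (int m + 1)"
      using v by (simp add: algebra_simps)
    also have "per_ext m n g \<dots> = (q + 1) * (int n + 1) + g 0"
      by (intro per_ext_div_mod) auto
    finally show ?thesis
      using v0 \<open>r = int m\<close> assms(2) by (simp add: algebra_simps)
  qed
qed

lemma lam_plus_per_ext: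
  assumes "\<And>j. 0 \<le> j \<Longrightarrow> j < int m \<Longrightarrow> g j \<le> g (j + 1)"
    and "g (int m) \<le> g 0 + int n + 1" and "0 \<le> g 0"
  shows "lam_plus m n (per_ext m n g)"
proof -
  have "mono (per_ext m n g)"
    by (intro mono_int_SucI per_ext_le_succ assms(1,2))
  then show ?thesis
    using per_ext_periodic per_ext_base[of 0 m n g] assms(3) by (simp add: lam_plus_def lam_inf_def)
qed

lemma lam_plus_eps: "lam_plus (n - 1) n (eps n i)"
  unfolding eps_def by (rule lam_plus_per_ext) auto

lemma lam_plus_eta: "lam_plus (n + 1) n (eta n i)"
  unfolding eta_def by (rule lam_plus_per_ext) auto

lemma lam_plus_id: "lam_plus m m (\<lambda>v. v)"
  by (simp add: lam_plus_def lam_inf_def mono_def)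

lemma lam_plus_shift: "lam_plus n n (\<lambda>v. v + int k)"
  by (simp add: lam_plus_def lam_inf_def mono_def)

lemma tau_eq: "tau n = (\<lambda>v. v + 1)"
  by (rule ext) (simp add: tau_def per_ext_def div_mult_mod_eq)

lemma lam_plus_tau: "lam_plus n n (tau n)"
  using lam_plus_shift[of n 1] by (simp add: tau_eq)

lemma lam_plus_comp:
  assumes "lam_plus m n f" "lam_plus n k g"
  shows "lam_plus m k (g \<circ> f)"
proof -
  have "mono f" "mono g" "0 \<le> f 0" "0 \<le> g 0"
    using assms by (simp_all add: lam_plus_def lam_inf_def)
  then have "0 \<le> g (f 0)"
    by (meson monoD order_trans)
  with assms \<open>mono f\<close> \<open>mono g\<close> show ?thesis
    by (auto simp: lam_plus_def lam_inf_def mono_def)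
qed

lemma lam_inf_shift:
  assumes "lam_inf m n f"
  shows "f (j + q * (int m + 1)) = f j + q * (int n + 1)"
proof (induction q rule: int_induct[where k = 0])
  case (step1 q)
  then show ?case
    using assms[unfolded lam_inf_def, THEN conjunct2, rule_format, of "j + q * (int m + 1)"]
    by (simp add: algebra_simps)
next
  case (step2 q)
  then show ?case
    using assms[unfolded lam_inf_def, THEN conjunct2, rule_format, of "j + (q - 1) * (int m + 1)"]
    by (simp add: algebra_simps)
qed simp

lemma lam_inf_eqI:
  assumes "lam_inf m n f" "lam_inf m n g"
    and "\<And>j. 0 \<le> j \<Longrightarrow> j \<le> int m \<Longrightarrow> f j = g j"
  shows "f = g"
proof
  fix v
  obtain q r where r: "0 \<le> r" "r \<le> int m" and v: "v = r + q * (int m + 1)"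
    by (rule int_div_mod_decomp)
  show "f v = g v"
    using lam_inf_shift[OF assms(1)] lam_inf_shift[OF assms(2)] assms(3)[OF r] v by simp
qed

lemma lam_inf_comp_shift:
  assumes "lam_inf m n f"
  shows "f \<circ> (\<lambda>v. v + int (Suc m)) = (\<lambda>v. v + int (Suc n)) \<circ> f"
proof
  fix v
  have "f (v + int m + 1) = f v + int n + 1"
    using assms by (simp add: lam_inf_def)
  then show "(f \<circ> (\<lambda>v. v + int (Suc m))) v = ((\<lambda>v. v + int (Suc n)) \<circ> f) v"
    by (metis add.assoc add.commute comp_apply of_nat_Suc)
qed

lemma lam_plus_eps_Suc: "lam_plus n (Suc n) (eps (Suc n) i)"
  using lam_plus_eps[of "Suc n" i] by simp

lemma lam_plus_eta_Suc: "lam_plus (Suc n) n (eta n i)"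
  using lam_plus_eta[of n i] by simp

lemma eps0_val: "0 \<le> j \<Longrightarrow> j \<le> int n \<Longrightarrow> eps (Suc n) 0 j = j + 1"
  unfolding eps_def by (simp add: per_ext_base)

lemma eps0_val_second: "int n + 1 \<le> j \<Longrightarrow> j \<le> 2 * int n + 1 \<Longrightarrow>
    eps (Suc n) 0 j = j + 2"
  unfolding eps_def by (simp add: per_ext_second_period)

lemma eta_last_val: "0 \<le> v \<Longrightarrow> v \<le> int n + 1 \<Longrightarrow> eta n (Suc n) v = v"
  unfolding eta_def by (simp add: per_ext_base)

lemma eta_last_val_second: "int n + 2 \<le> v \<Longrightarrow> v \<le> 2 * int n + 3 \<Longrightarrow>
    eta n (Suc n) v = v - 1"
  unfolding eta_def by (simp add: per_ext_second_period)

lemma eta_last_comp_eps0: "eta (Suc n) (Suc (Suc n)) \<circ> eps (Suc (Suc n)) 0 = tau (Suc n)"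
proof (rule lam_inf_eqI[of "Suc n" "Suc n"])
  show "lam_inf (Suc n) (Suc n) (eta (Suc n) (Suc (Suc n)) \<circ> eps (Suc (Suc n)) 0)"
    using lam_plus_comp[OF lam_plus_eps_Suc lam_plus_eta_Suc] by (simp add: lam_plus_def)
  show "lam_inf (Suc n) (Suc n) (tau (Suc n))"
    using lam_plus_tau by (simp add: lam_plus_def)
qed (simp add: eps0_val eta_last_val tau_eq)

text \<open>Under M, karoubi_letter n True and karoubi_letter n False become t_{n+1} and
s_{n,n+1} d_{n+1,0}, so a word c of length n names a term of the expansion of
(s_{n,n+1} d_{n+1,0} - t_{n+1})^n; p_word n 0 c names the term of p_n that takes
s_{n-1,i} d_{n,i+1} from the i-th factor exactly when c ! i.\<close>

definition eps0_eta :: "nat \<Rightarrow> int \<Rightarrow> int" where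
  "eps0_eta n = eps (Suc n) 0 \<circ> eta n (Suc n)"

definition karoubi_letter :: "nat \<Rightarrow> bool \<Rightarrow> int \<Rightarrow> int" where
  "karoubi_letter n b = (if b then tau (Suc n) else eps0_eta n)"

fun karoubi_word :: "nat \<Rightarrow> bool list \<Rightarrow> int \<Rightarrow> int" where
  "karoubi_word n [] = (\<lambda>v. v)"
| "karoubi_word n (b # c) = karoubi_letter n b \<circ> karoubi_word n c"

definition eps_eta :: "nat \<Rightarrow> nat \<Rightarrow> int \<Rightarrow> int" where
  "eps_eta n i = eps n (Suc i) \<circ> eta (n - 1) i"

fun p_word :: "nat \<Rightarrow> nat \<Rightarrow> bool list \<Rightarrow> int \<Rightarrow> int" where
  "p_word n i [] = (\<lambda>v. v)"
| "p_word n i (b # c) = p_word n (Suc i) c \<circ> (if b then eps_eta n i else (\<lambda>v. v))"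

lemma lam_plus_eps0_eta: "lam_plus (Suc n) (Suc n) (eps0_eta n)"
  unfolding eps0_eta_def by (rule lam_plus_comp[OF lam_plus_eta_Suc lam_plus_eps_Suc])

lemma lam_plus_karoubi_letter: "lam_plus (Suc n) (Suc n) (karoubi_letter n b)"
  unfolding karoubi_letter_def using lam_plus_eps0_eta lam_plus_tau by simp

lemma lam_plus_karoubi_word: "lam_plus (Suc n) (Suc n) (karoubi_word n c)"
proof (induction c)
  case Nil
  show ?case
    using lam_plus_id by simp
next
  case (Cons b c)
  show ?case
    unfolding karoubi_word.simps by (rule lam_plus_comp[OF Cons.IH lam_plus_karoubi_letter])
qed

lemma lam_plus_eps_eta: "i < n \<Longrightarrow> lam_plus n n (eps_eta n i)"
  unfolding eps_eta_def using lam_plus_comp[OF lam_plus_eta[of "n - 1" i] lam_plus_eps[of n "Suc i"]]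
  by simp

lemma lam_plus_p_word: "i + length c \<le> n \<Longrightarrow> lam_plus n n (p_word n i c)"
proof (induction c arbitrary: i)
  case Nil
  show ?case
    using lam_plus_id by simp
next
  case (Cons b c)
  have "lam_plus n n (if b then eps_eta n i else (\<lambda>v. v))"
    using Cons.prems lam_plus_eps_eta lam_plus_id by simp
  then show ?case
    unfolding p_word.simps by (rule lam_plus_comp) (use Cons in simp)
qed

lemma eps0_eta_val:
  assumes "0 \<le> v" "v \<le> 2 * int n + 2"
  shows "eps0_eta n v = (if v = int n + 1 then v + 2 else v + 1)"
proof -
  consider "v \<le> int n" | "v = int n + 1" | "int n + 2 \<le> v"
    by linarith
  then show ?thesis
    by cases (use assms in \<open>simp_all add: eps0_eta_def eta_last_val eta_last_val_second
        eps0_val eps0_val_second\<close>)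
qed

lemma eps_eta_val:
  assumes "i < n" "0 \<le> j" "j \<le> int n"
  shows "eps_eta n i j = (if j = int i + 1 then int i else j)"
proof -
  obtain m where n: "n = Suc m"
    using assms(1) less_imp_Suc_add by blast
  have eta: "eta m i w = (if w \<le> int i then w else w - 1)" if "0 \<le> w" "w \<le> int n" for w
    unfolding eta_def using that n by (subst per_ext_base) auto
  have eps: "eps n (Suc i) w = (if w \<le> int i then w else w + 1)" if "0 \<le> w" "w \<le> int m" for w
    unfolding eps_def using assms that n by (subst per_ext_base) auto
  consider "j \<le> int i" | "j = int i + 1" | "int i + 2 \<le> j"
    by linarith
  then show ?thesis
    by cases (use assms eta[of j] eps[of j] eps[of "int i"] eps[of "j - 1"] in
        \<open>simp_all add: eps_eta_def n\<close>)
qed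

lemma karoubi_word_eps0_val:
  assumes "length c = k" "k \<le> n" "j \<le> n"
  shows "karoubi_word n c (eps (Suc n) 0 (int j))
    = int j + 1 + int k + (if n + 1 \<le> j + k \<and> \<not> c ! (j + k - n - 1) then 1 else 0)"
  using assms
proof (induction c arbitrary: k)
  case Nil
  then show ?case
    by (simp add: eps0_val)
next
  case (Cons b c)
  define v where "v = karoubi_word n c (eps (Suc n) 0 (int j))"
  have k: "k = Suc (length c)"
    using Cons.prems by simp
  have v_val: "v = int j + 1 + int (length c)
      + (if n + 1 \<le> j + length c \<and> \<not> c ! (j + length c - n - 1) then 1 else 0)"
    unfolding v_def using Cons.IH Cons.prems k by simp
  have lhs: "karoubi_word n (b # c) (eps (Suc n) 0 (int j)) = karoubi_letter n b v"
    by (simp add: v_def)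
  consider "j + length c < n" | "j + length c = n" | "n < j + length c"
    by linarith
  then show ?case
  proof cases
    case 3
    then have "j + k - n - 1 = Suc (j + length c - n - 1)"
      using k by simp
    then show ?thesis
      using 3 lhs v_val k Cons.prems by (simp add: karoubi_letter_def tau_eq eps0_eta_val)
  qed (use lhs v_val k in \<open>simp_all add: karoubi_letter_def tau_eq eps0_eta_val\<close>)
qed

lemma dk_word_val:
  assumes "length c = n" "j \<le> n"
  shows "(eta n (Suc n) \<circ> karoubi_word n c \<circ> eps (Suc n) 0) (int j)
    = int j + int n + 1 - (if 1 \<le> j \<and> c ! (j - 1) then 1 else 0)"
proof -
  have "karoubi_word n c (eps (Suc n) 0 (int j))
      = int j + 1 + int n + (if 1 \<le> j \<and> \<not> c ! (j - 1) then 1 else 0)"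
    using karoubi_word_eps0_val[OF assms(1) _ assms(2)] by simp
  then show ?thesis
    using assms by (cases "j = 0") (simp_all add: eta_last_val eta_last_val_second)
qed

lemma p_word_val:
  assumes "i + length c = n" "j \<le> n"
  shows "p_word n i c (int j) = int j - (if i + 1 \<le> j \<and> c ! (j - i - 1) then 1 else 0)"
  using assms
proof (induction c arbitrary: i j)
  case Nil
  then show ?case
    by simp
next
  case (Cons b c)
  have i: "i < n"
    using Cons.prems by simp
  have IH: "p_word n (Suc i) c (int j) = int j - (if i + 2 \<le> j \<and> c ! (j - i - 2) then 1 else 0)"
    using Cons.IH[of "Suc i"] Cons.prems by simp
  have fix_i: "p_word n (Suc i) c (int i) = int i"
    using Cons.IH[of "Suc i" i] Cons.prems by simp
  show ?case
  proof (cases "b \<and> j = i + 1")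
    case True
    then show ?thesis
      using i fix_i Cons.prems by (simp add: eps_eta_val)
  next
    case False
    then have letter: "(if b then eps_eta n i else (\<lambda>v. v)) (int j) = int j"
      using i Cons.prems by (auto simp: eps_eta_val)
    consider "j \<le> i" | "j = i + 1" | "i + 2 \<le> j"
      by linarith
    then show ?thesis
    proof cases
      case 3
      then have "j - i - 1 = Suc (j - i - 2)"
        by simp
      then show ?thesis
        using 3 IH letter by simp
    qed (use IH letter False in simp_all)
  qed
qed

lemma dk_word_eq_shift_p_word:
  assumes "length c = n"
  shows "eta n (Suc n) \<circ> karoubi_word n c \<circ> eps (Suc n) 0 = (\<lambda>v. v + int (Suc n)) \<circ> p_word n 0 c"
proof (rule lam_inf_eqI[of n n])
  show "lam_inf n n (eta n (Suc n) \<circ> karoubi_word n c \<circ> eps (Suc n) 0)"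
    using lam_plus_comp[OF lam_plus_eps_Suc lam_plus_comp[OF lam_plus_karoubi_word lam_plus_eta_Suc]]
    by (simp add: lam_plus_def comp_assoc)
  show "lam_inf n n ((\<lambda>v. v + int (Suc n)) \<circ> p_word n 0 c)"
    using lam_plus_comp[OF lam_plus_p_word[of 0 c n] lam_plus_shift[of n "Suc n"]] assms
    by (simp add: lam_plus_def)
next
  fix j :: int
  assume "0 \<le> j" "j \<le> int n"
  then obtain j' where "j = int j'" "j' \<le> n"
    by (metis nat_int nat_le_iff zero_le_imp_eq_int)
  then show "(eta n (Suc n) \<circ> karoubi_word n c \<circ> eps (Suc n) 0) j
      = ((\<lambda>v. v + int (Suc n)) \<circ> p_word n 0 c) j"
    using dk_word_val[OF assms] p_word_val[of 0 c n j'] assms by simp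
qed

section \<open>Alternating sums in a pre-additive category\<close>

definition words :: "nat \<Rightarrow> bool list list" where
  "words k = List.n_lists k [False, True]"

lemma words_0 [simp]: "words 0 = [[]]"
  by (simp add: words_def)

lemma words_Suc: "words (Suc k) = concat (map (\<lambda>c. [False # c, True # c]) (words k))"
  by (simp add: words_def)

lemma set_words [simp]: "set (words k) = {c. length c = k}"
  by (auto simp: words_def set_n_lists)

locale preadditive_category =
  fixes C :: "('o, 'm) preadd_cat"
  assumes preadditive: "preadditive C"
begin

lemma cmp_closed [intro]: "f \<in> hom C a b \<Longrightarrow> g \<in> hom C b c \<Longrightarrow>
    cmp C g f \<in> hom C a c"
  using preadditive unfolding preadditive_def by metis

lemma cmp_assoc:
  "f \<in> hom C a b \<Longrightarrow> g \<in> hom C b c \<Longrightarrow>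
    h \<in> hom C c d \<Longrightarrow> cmp C h (cmp C g f) = cmp C (cmp C h g) f"
  using preadditive unfolding preadditive_def by metis

lemma idm_closed [intro, simp]: "idm C a \<in> hom C a a"
  using preadditive unfolding preadditive_def by metis

lemma idm_left [simp]: "f \<in> hom C a b \<Longrightarrow> cmp C (idm C b) f = f"
  using preadditive unfolding preadditive_def by metis

lemma idm_right [simp]: "f \<in> hom C a b \<Longrightarrow> cmp C f (idm C a) = f"
  using preadditive unfolding preadditive_def by metis

lemma zer_closed [intro, simp]: "zer C a b \<in> hom C a b"
  using preadditive unfolding preadditive_def by metis

lemma pls_closed [intro]: "f \<in> hom C a b \<Longrightarrow> g \<in> hom C a b \<Longrightarrow>
    pls C f g \<in> hom C a b"
  using preadditive unfolding preadditive_def by metis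

lemma pls_commute: "f \<in> hom C a b \<Longrightarrow> g \<in> hom C a b \<Longrightarrow>
    pls C f g = pls C g f"
  using preadditive unfolding preadditive_def by metis

lemma pls_assoc:
  "f \<in> hom C a b \<Longrightarrow> g \<in> hom C a b \<Longrightarrow>
    h \<in> hom C a b \<Longrightarrow> pls C (pls C f g) h = pls C f (pls C g h)"
  using preadditive unfolding preadditive_def by metis

lemma pls_zer [simp]: "f \<in> hom C a b \<Longrightarrow> pls C f (zer C a b) = f"
  using preadditive unfolding preadditive_def by metis

lemma neg_closed [intro]: "f \<in> hom C a b \<Longrightarrow> neg C f \<in> hom C a b"
  using preadditive unfolding preadditive_def by metis

lemma pls_neg: "f \<in> hom C a b \<Longrightarrow> pls C f (neg C f) = zer C a b"
  using preadditive unfolding preadditive_def by metis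

lemma cmp_pls_left:
  "f \<in> hom C a b \<Longrightarrow> g \<in> hom C b c \<Longrightarrow>
    g' \<in> hom C b c \<Longrightarrow>
    cmp C (pls C g g') f = pls C (cmp C g f) (cmp C g' f)"
  using preadditive unfolding preadditive_def by metis

lemma cmp_pls_right:
  "f \<in> hom C a b \<Longrightarrow> f' \<in> hom C a b \<Longrightarrow>
    g \<in> hom C b c \<Longrightarrow>
    cmp C g (pls C f f') = pls C (cmp C g f) (cmp C g f')"
  using preadditive unfolding preadditive_def by metis

lemma zer_pls [simp]: "f \<in> hom C a b \<Longrightarrow> pls C (zer C a b) f = f"
  using pls_commute[of "zer C a b" a b f] by simp

lemma pls_left_commute:
  assumes "f \<in> hom C a b" "g \<in> hom C a b" "h \<in> hom C a b"
  shows "pls C f (pls C g h) = pls C g (pls C f h)"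
  using pls_assoc[of f a b g h] pls_assoc[of g a b f h] pls_commute[of f a b g] assms by simp

lemma neg_unique:
  assumes x: "x \<in> hom C a b" and y: "y \<in> hom C a b" and "pls C x y = zer C a b"
  shows "y = neg C x"
proof -
  have "y = pls C y (pls C x (neg C x))"
    using x y by (simp add: pls_neg)
  also have "\<dots> = pls C (pls C x y) (neg C x)"
    using x y by (simp add: neg_closed pls_left_commute flip: pls_assoc)
  finally show ?thesis
    using assms by (simp add: neg_closed)
qed

lemma pls_idem_imp_zer:
  assumes x: "x \<in> hom C a b" and "pls C x x = x"
  shows "x = zer C a b"
proof -
  have "zer C a b = pls C (pls C x x) (neg C x)"
    using assms by (simp add: pls_neg)
  also have "\<dots> = x"
    using x by (simp add: pls_assoc pls_neg neg_closed)
  finally show ?thesis ..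
qed

lemma neg_neg [simp]: "x \<in> hom C a b \<Longrightarrow> neg C (neg C x) = x"
  by (metis neg_closed neg_unique pls_commute pls_neg)

lemma neg_pls:
  assumes x: "x \<in> hom C a b" and y: "y \<in> hom C a b"
  shows "neg C (pls C x y) = pls C (neg C x) (neg C y)"
proof -
  have "pls C (pls C x y) (pls C (neg C x) (neg C y))
      = pls C (pls C x (neg C x)) (pls C y (neg C y))"
    using x y by (simp add: neg_closed pls_closed pls_assoc pls_left_commute[of y a b "neg C x"])
  also have "\<dots> = zer C a b"
    using x y by (simp add: pls_neg)
  finally show ?thesis
    using x y by (intro neg_unique[symmetric]) auto
qed

lemma cmp_zer_left [simp]:
  assumes "f \<in> hom C c a"
  shows "cmp C (zer C a b) f = zer C c b"
  using assms cmp_pls_left[OF assms zer_closed zer_closed, of b] by (intro pls_idem_imp_zer) auto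

lemma cmp_zer_right [simp]:
  assumes "f \<in> hom C b c"
  shows "cmp C f (zer C a b) = zer C a c"
  using assms cmp_pls_right[OF zer_closed zer_closed assms, of a] by (intro pls_idem_imp_zer) auto

lemma cmp_neg_left:
  assumes f: "f \<in> hom C a b" and g: "g \<in> hom C b c"
  shows "cmp C (neg C g) f = neg C (cmp C g f)"
proof (rule neg_unique)
  show "pls C (cmp C g f) (cmp C (neg C g) f) = zer C a c"
    using f g by (simp add: neg_closed pls_neg flip: cmp_pls_left)
qed (use f g in auto)

lemma cmp_neg_right:
  assumes f: "f \<in> hom C a b" and g: "g \<in> hom C b c"
  shows "cmp C g (neg C f) = neg C (cmp C g f)"
proof (rule neg_unique)
  show "pls C (cmp C g f) (cmp C g (neg C f)) = zer C a c"
    using f g by (simp add: neg_closed pls_neg flip: cmp_pls_right)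
qed (use f g in auto)

lemma mns_closed [intro]: "f \<in> hom C a b \<Longrightarrow> g \<in> hom C a b \<Longrightarrow>
    mns C f g \<in> hom C a b"
  by (auto simp: mns_def)

lemma neg_mns: "f \<in> hom C a b \<Longrightarrow> g \<in> hom C a b \<Longrightarrow>
    neg C (mns C f g) = mns C g f"
  using pls_commute[of "neg C f" a b g] by (simp add: mns_def neg_pls neg_closed)

lemma cmp_mns_left:
  "f \<in> hom C a b \<Longrightarrow> g \<in> hom C b c \<Longrightarrow>
    g' \<in> hom C b c \<Longrightarrow>
    cmp C (mns C g g') f = mns C (cmp C g f) (cmp C g' f)"
  by (simp add: mns_def cmp_pls_left cmp_neg_left neg_closed)

lemma cmp_mns_right:
  "f \<in> hom C a b \<Longrightarrow> f' \<in> hom C a b \<Longrightarrow>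
    g \<in> hom C b c \<Longrightarrow>
    cmp C g (mns C f f') = mns C (cmp C g f) (cmp C g f')"
  by (simp add: mns_def cmp_pls_right cmp_neg_right neg_closed)

lemma sgnm_closed [intro]: "f \<in> hom C a b \<Longrightarrow> sgnm C k f \<in> hom C a b"
  by (auto simp: sgnm_def)

lemma sgnm_0 [simp]: "sgnm C 0 f = f"
  by (simp add: sgnm_def)

lemma sgnm_Suc: "f \<in> hom C a b \<Longrightarrow> sgnm C (Suc k) f = neg C (sgnm C k f)"
  by (simp add: sgnm_def)

lemma sgnm_sgnm_same [simp]: "f \<in> hom C a b \<Longrightarrow> sgnm C k (sgnm C k f) = f"
  by (simp add: sgnm_def)

lemma sgnm_mns:
  "f \<in> hom C a b \<Longrightarrow> g \<in> hom C a b \<Longrightarrow>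
    sgnm C k (mns C f g) = mns C (sgnm C k f) (sgnm C k g)"
  by (simp add: sgnm_def mns_def neg_pls neg_closed)

lemma cmp_sgnm_left: "f \<in> hom C a b \<Longrightarrow> g \<in> hom C b c \<Longrightarrow>
    cmp C (sgnm C k g) f = sgnm C k (cmp C g f)"
  by (simp add: sgnm_def cmp_neg_left)

lemma cmp_sgnm_right: "f \<in> hom C a b \<Longrightarrow> g \<in> hom C b c \<Longrightarrow>
    cmp C g (sgnm C k f) = sgnm C k (cmp C g f)"
  by (simp add: sgnm_def cmp_neg_right)

lemma mpow_0 [simp]: "mpow C a 0 f = idm C a"
  by (simp add: mpow_def)

lemma mpow_Suc: "mpow C a (Suc k) f = cmp C f (mpow C a k f)"
  by (simp add: mpow_def)

lemma mpow_closed [intro]: "f \<in> hom C a a \<Longrightarrow> mpow C a k f \<in> hom C a a"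
  by (induction k) (auto simp: mpow_Suc)

lemma mpow_Suc_right: "f \<in> hom C a a \<Longrightarrow> mpow C a (Suc k) f = cmp C (mpow C a k f) f"
proof (induction k)
  case (Suc k)
  then show ?case
    using cmp_assoc[of f a a "mpow C a k f" a f a] by (simp add: mpow_Suc mpow_closed)
qed (simp add: mpow_Suc)

lemma mpow_neg: "f \<in> hom C a a \<Longrightarrow> mpow C a k (neg C f) = sgnm C k (mpow C a k f)"
proof (induction k)
  case (Suc k)
  have f: "f \<in> hom C a a" and p: "mpow C a k f \<in> hom C a a"
    using Suc.prems by (auto intro: mpow_closed)
  have "mpow C a (Suc k) (neg C f) = cmp C (neg C f) (sgnm C k (mpow C a k f))"
    using Suc by (simp add: mpow_Suc)
  also have "\<dots> = neg C (sgnm C k (cmp C f (mpow C a k f)))"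
    using f p by (simp add: cmp_neg_left[OF sgnm_closed[OF p] f] cmp_sgnm_right)
  finally show ?case
    using f p by (simp add: mpow_Suc sgnm_Suc[OF cmp_closed[OF p f]])
qed simp

lemma mpow_sgnm: "f \<in> hom C a a \<Longrightarrow>
    mpow C a k (sgnm C m f) = sgnm C (m * k) (mpow C a k f)"
  by (cases "even m") (auto simp: sgnm_def mpow_neg)

definition hsum :: "'o \<Rightarrow> 'o \<Rightarrow> 'm list \<Rightarrow> 'm" where
  "hsum a b fs = foldr (pls C) fs (zer C a b)"

lemma hsum_Nil [simp]: "hsum a b [] = zer C a b"
  by (simp add: hsum_def)

lemma hsum_Cons [simp]: "hsum a b (f # fs) = pls C f (hsum a b fs)"
  by (simp add: hsum_def)

lemma hsum_closed [intro]: "(\<And>f. f \<in> set fs \<Longrightarrow>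
    f \<in> hom C a b) \<Longrightarrow> hsum a b fs \<in> hom C a b"
  by (induction fs) auto

lemma hsum_append:
  "(\<And>f. f \<in> set (fs @ gs) \<Longrightarrow> f \<in> hom C a b) \<Longrightarrow>
    hsum a b (fs @ gs) = pls C (hsum a b fs) (hsum a b gs)"
proof (induction fs)
  case (Cons f fs)
  have f: "f \<in> hom C a b" and "hsum a b fs \<in> hom C a b" "hsum a b gs \<in> hom C a b"
    using Cons.prems by (auto intro!: hsum_closed)
  moreover have "hsum a b (fs @ gs) = pls C (hsum a b fs) (hsum a b gs)"
    using Cons.prems by (intro Cons.IH) auto
  ultimately show ?case
    by (simp add: pls_assoc)
qed (use hsum_closed[of gs a b] in simp)

lemma hsum_concat:
  "(\<And>fs f. fs \<in> set fss \<Longrightarrow> f \<in> set fs \<Longrightarrow>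
    f \<in> hom C a b) \<Longrightarrow>
    hsum a b (concat fss) = hsum a b (map (hsum a b) fss)"
proof (induction fss)
  case (Cons fs fss)
  have "hsum a b (concat fss) = hsum a b (map (hsum a b) fss)"
    using Cons.prems by (intro Cons.IH) auto
  moreover have "hsum a b (fs @ concat fss) = pls C (hsum a b fs) (hsum a b (concat fss))"
    using Cons.prems by (intro hsum_append) auto
  ultimately show ?case
    by simp
qed simp

lemma cmp_hsum_left:
  "f \<in> hom C a b \<Longrightarrow> (\<And>g. g \<in> set gs \<Longrightarrow>
    g \<in> hom C b c) \<Longrightarrow>
    cmp C (hsum b c gs) f = hsum a c (map (\<lambda>g. cmp C g f) gs)"
proof (induction gs)
  case (Cons g gs)
  have "g \<in> hom C b c" "hsum b c gs \<in> hom C b c"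
    using Cons.prems by (auto intro!: hsum_closed)
  moreover have "cmp C (hsum b c gs) f = hsum a c (map (\<lambda>g. cmp C g f) gs)"
    using Cons.prems by (intro Cons.IH) auto
  ultimately show ?case
    using Cons.prems(1) by (simp add: cmp_pls_left)
qed simp

lemma cmp_hsum_right:
  "g \<in> hom C b c \<Longrightarrow> (\<And>f. f \<in> set fs \<Longrightarrow>
    f \<in> hom C a b) \<Longrightarrow>
    cmp C g (hsum a b fs) = hsum a c (map (cmp C g) fs)"
proof (induction fs)
  case (Cons f fs)
  have "f \<in> hom C a b" "hsum a b fs \<in> hom C a b"
    using Cons.prems by (auto intro!: hsum_closed)
  moreover have "cmp C g (hsum a b fs) = hsum a c (map (cmp C g) fs)"
    using Cons.prems by (intro Cons.IH) auto
  ultimately show ?case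
    using Cons.prems(1) by (simp add: cmp_pls_right)
qed simp

definition signed_sum :: "'o \<Rightarrow> 'o \<Rightarrow> nat \<Rightarrow> (bool list \<Rightarrow> 'm) \<Rightarrow> 'm" where
  "signed_sum a b k f = hsum a b (map (\<lambda>c. sgnm C (count_list c True) (f c)) (words k))"

lemma signed_sum_closed [intro]:
  "(\<And>c. length c = k \<Longrightarrow> f c \<in> hom C a b) \<Longrightarrow>
    signed_sum a b k f \<in> hom C a b"
  unfolding signed_sum_def by (intro hsum_closed) (auto intro!: sgnm_closed)

lemma signed_sum_cong:
  "(\<And>c. length c = k \<Longrightarrow> f c = g c) \<Longrightarrow>
    signed_sum a b k f = signed_sum a b k g"
  unfolding signed_sum_def by (auto intro!: arg_cong[where f = "hsum a b"])

lemma signed_sum_0: "f [] \<in> hom C a b \<Longrightarrow> signed_sum a b 0 f = f []"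
  by (simp add: signed_sum_def)

lemma signed_sum_Suc:
  assumes "\<And>c. length c = Suc k \<Longrightarrow> f c \<in> hom C a b"
  shows "signed_sum a b (Suc k) f = signed_sum a b k (\<lambda>c. mns C (f (False # c)) (f (True # c)))"
proof -
  let ?s = "\<lambda>c. sgnm C (count_list c True) (f c)"
  have pair: "pls C (sgnm C (count_list c True) (f (False # c)))
        (pls C (sgnm C (Suc (count_list c True)) (f (True # c))) (zer C a b))
      = sgnm C (count_list c True) (mns C (f (False # c)) (f (True # c)))"
    if "length c = k" for c
  proof -
    have "f (False # c) \<in> hom C a b" "f (True # c) \<in> hom C a b"
      using that assms by simp_all
    then show ?thesis
      by (simp add: sgnm_mns sgnm_Suc sgnm_closed neg_closed) (simp add: mns_def)
  qed
  have "signed_sum a b (Suc k) f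
      = hsum a b (map (\<lambda>c. hsum a b [?s (False # c), ?s (True # c)]) (words k))"
    unfolding signed_sum_def words_Suc map_concat using assms
    by (subst hsum_concat) (auto intro!: sgnm_closed simp: comp_def)
  also have "\<dots> = signed_sum a b k (\<lambda>c. mns C (f (False # c)) (f (True # c)))"
    unfolding signed_sum_def by (rule arg_cong[where f = "hsum a b"], rule map_cong) (simp_all add: pair)
  finally show ?thesis .
qed

lemma cmp_signed_sum_left:
  assumes "f \<in> hom C a b" "\<And>c. length c = k \<Longrightarrow> g c \<in> hom C b d"
  shows "cmp C (signed_sum b d k g) f = signed_sum a d k (\<lambda>c. cmp C (g c) f)"
proof -
  have "cmp C (sgnm C (count_list c True) (g c)) f = sgnm C (count_list c True) (cmp C (g c) f)"
    if "length c = k" for c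
    by (rule cmp_sgnm_left[OF assms(1) assms(2)[OF that]])
  then show ?thesis
    unfolding signed_sum_def using assms
    by (subst cmp_hsum_left) (auto intro!: sgnm_closed arg_cong[where f = "hsum a d"])
qed

lemma cmp_signed_sum_right:
  assumes "g \<in> hom C b d" "\<And>c. length c = k \<Longrightarrow> f c \<in> hom C a b"
  shows "cmp C g (signed_sum a b k f) = signed_sum a d k (\<lambda>c. cmp C g (f c))"
proof -
  have "cmp C g (sgnm C (count_list c True) (f c)) = sgnm C (count_list c True) (cmp C g (f c))"
    if "length c = k" for c
    by (rule cmp_sgnm_right[OF assms(2)[OF that] assms(1)])
  then show ?thesis
    unfolding signed_sum_def using assms
    by (subst cmp_hsum_right) (auto intro!: sgnm_closed arg_cong[where f = "hsum a d"])
qed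

text \<open>The power is expanded from the right so that its words match those of p_n letter by
letter (dk_word_eq_shift_p_word).\<close>

fun rprod :: "'o \<Rightarrow> 'm \<Rightarrow> 'm \<Rightarrow> bool list \<Rightarrow> 'm" where
  "rprod a A B [] = idm C a"
| "rprod a A B (b # c) = cmp C (rprod a A B c) (if b then B else A)"

lemma rprod_closed [intro]: "A \<in> hom C a a \<Longrightarrow> B \<in> hom C a a \<Longrightarrow>
    rprod a A B c \<in> hom C a a"
  by (induction c) auto

lemma mpow_mns_eq_signed_sum:
  assumes "A \<in> hom C a a" "B \<in> hom C a a"
  shows "mpow C a k (mns C A B) = signed_sum a a k (rprod a A B)"
proof (induction k)
  case 0
  then show ?case
    by (simp add: signed_sum_0)
next
  case (Suc k)
  have "mpow C a (Suc k) (mns C A B) = cmp C (signed_sum a a k (rprod a A B)) (mns C A B)"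
    using assms by (simp add: mpow_Suc_right mns_closed Suc.IH)
  also have "\<dots> = signed_sum a a k (\<lambda>c. cmp C (rprod a A B c) (mns C A B))"
    using assms by (intro cmp_signed_sum_left) auto
  also have "\<dots> = signed_sum a a k (\<lambda>c. mns C (cmp C (rprod a A B c) A) (cmp C (rprod a A B c) B))"
    using assms by (intro signed_sum_cong) (rule cmp_mns_right[OF assms rprod_closed[OF assms]])
  also have "\<dots> = signed_sum a a (Suc k) (rprod a A B)"
    using assms by (subst signed_sum_Suc) auto
  finally show ?case .
qed

fun lprod :: "'o \<Rightarrow> (nat \<Rightarrow> 'm) \<Rightarrow> (nat \<Rightarrow> 'm) \<Rightarrow> nat list \<Rightarrow> bool list \<Rightarrow> 'm" where
  "lprod a A B (x # xs) (b # c) = cmp C (if b then B x else A x) (lprod a A B xs c)"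
| "lprod a A B _ _ = idm C a"

lemma lprod_closed [intro]:
  "(\<And>x. x \<in> set xs \<Longrightarrow>
    A x \<in> hom C a a \<and> B x \<in> hom C a a) \<Longrightarrow> lprod a A B xs c \<in> hom C a a"
  by (induction a A B xs c rule: lprod.induct) auto

lemma foldr_mns_eq_signed_sum:
  assumes "\<And>x. x \<in> set xs \<Longrightarrow> A x \<in> hom C a a \<and> B x \<in> hom C a a"
  shows "foldr (\<lambda>x. cmp C (mns C (A x) (B x))) xs (idm C a)
    = signed_sum a a (length xs) (lprod a A B xs)"
  using assms
proof (induction xs)
  case Nil
  then show ?case
    by (simp add: signed_sum_0)
next
  case (Cons x xs)
  then have A: "A x \<in> hom C a a" and B: "B x \<in> hom C a a"
    and closed: "\<And>c. lprod a A B xs c \<in> hom C a a"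
    by (auto intro: lprod_closed)
  have "foldr (\<lambda>x. cmp C (mns C (A x) (B x))) (x # xs) (idm C a)
      = cmp C (mns C (A x) (B x)) (signed_sum a a (length xs) (lprod a A B xs))"
    using Cons by simp
  also have "\<dots> = signed_sum a a (length xs) (\<lambda>c. cmp C (mns C (A x) (B x)) (lprod a A B xs c))"
    using A B closed by (intro cmp_signed_sum_right) auto
  also have "\<dots> = signed_sum a a (length xs)
      (\<lambda>c. mns C (cmp C (A x) (lprod a A B xs c)) (cmp C (B x) (lprod a A B xs c)))"
    by (intro signed_sum_cong) (rule cmp_mns_left[OF closed A B])
  also have "\<dots> = signed_sum a a (Suc (length xs)) (lprod a A B (x # xs))"
    using lprod_closed[of "x # xs" A a B] Cons.prems by (subst signed_sum_Suc) auto
  finally show ?case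
    by simp
qed

end

section \<open>Duplicial modules\<close>

locale duplicial_module = preadditive_category C for C :: "('o, 'm) preadd_cat" +
  fixes Ob :: "nat \<Rightarrow> 'o" and Mor :: "nat \<Rightarrow> nat \<Rightarrow> (int \<Rightarrow> int) \<Rightarrow> 'm"
  assumes duplicial: "duplicial C Ob Mor"
begin

lemma Mor_closed: "lam_plus m n f \<Longrightarrow> Mor m n f \<in> hom C (Ob n) (Ob m)"
  using duplicial unfolding duplicial_def by blast

lemma Mor_id [simp]: "Mor m m (\<lambda>v. v) = idm C (Ob m)"
  using duplicial unfolding duplicial_def id_def by blast

lemma Mor_comp: "lam_plus m n f \<Longrightarrow> lam_plus n k g \<Longrightarrow>
    cmp C (Mor m n f) (Mor n k g) = Mor m k (g \<circ> f)"
  using duplicial unfolding duplicial_def by metis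

lemma dface_0_sdeg_last:
  "cmp C (dface Mor (Suc (Suc n)) 0) (sdeg Mor (Suc n) (Suc (Suc n))) = tcyc Mor (Suc n)"
  unfolding dface_def sdeg_def tcyc_def
  using Mor_comp[OF lam_plus_eps_Suc lam_plus_eta_Suc] eta_last_comp_eps0[of n] by simp

lemma sdeg_last_dface_0:
  "cmp C (sdeg Mor n (Suc n)) (dface Mor (Suc n) 0) = Mor (Suc n) (Suc n) (eps0_eta n)"
  unfolding dface_def sdeg_def eps0_eta_def
  using Mor_comp[OF lam_plus_eta_Suc lam_plus_eps_Suc] by simp

lemma sdeg_dface_Suc:
  "i < n \<Longrightarrow> cmp C (sdeg Mor (n - 1) i) (dface Mor n (Suc i)) = Mor n n (eps_eta n i)"
  unfolding dface_def sdeg_def eps_eta_def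
  using Mor_comp[OF lam_plus_eta[of "n - 1" i] lam_plus_eps[of n "Suc i"]] by simp

lemma kar_Suc:
  "kar C Ob Mor (Suc n) = sgnm C (Suc n) (mns C (tcyc Mor (Suc n)) (Mor (Suc n) (Suc n) (eps0_eta n)))"
  unfolding kar_def by (simp add: dface_0_sdeg_last sdeg_last_dface_0)

lemma mpow_tcyc: "mpow C (Ob n) k (tcyc Mor n) = Mor n n (\<lambda>v. v + int k)"
proof (induction k)
  case (Suc k)
  have "mpow C (Ob n) (Suc k) (tcyc Mor n) = Mor n n ((\<lambda>v. v + int k) \<circ> tau n)"
    using Suc Mor_comp[OF lam_plus_tau lam_plus_shift] by (simp add: mpow_Suc tcyc_def)
  then show ?case
    by (simp add: tau_eq comp_def add.assoc)
qed simp

lemma rprod_karoubi_word: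
  "rprod (Ob (Suc n)) (Mor (Suc n) (Suc n) (eps0_eta n)) (tcyc Mor (Suc n)) c
    = Mor (Suc n) (Suc n) (karoubi_word n c)"
proof (induction c)
  case (Cons b c)
  have "rprod (Ob (Suc n)) (Mor (Suc n) (Suc n) (eps0_eta n)) (tcyc Mor (Suc n)) (b # c)
      = cmp C (Mor (Suc n) (Suc n) (karoubi_word n c)) (Mor (Suc n) (Suc n) (karoubi_letter n b))"
    using Cons.IH by (simp add: karoubi_letter_def tcyc_def)
  also have "\<dots> = Mor (Suc n) (Suc n) (karoubi_word n (b # c))"
    unfolding karoubi_word.simps by (rule Mor_comp[OF lam_plus_karoubi_word lam_plus_karoubi_letter])
  finally show ?case .
qed simp

lemma lprod_p_word:
  "i + length c = n \<Longrightarrow>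
    lprod (Ob n) (\<lambda>_. idm C (Ob n)) (\<lambda>i. cmp C (sdeg Mor (n - 1) i) (dface Mor n (Suc i))) [i..<n] c
    = Mor n n (p_word n i c)"
proof (induction c arbitrary: i)
  case (Cons b c)
  then have i: "i < n" and upt: "[i..<n] = i # [Suc i..<n]"
    by (simp_all add: upt_conv_Cons)
  have letter: "lam_plus n n (if b then eps_eta n i else (\<lambda>v. v))"
    using i lam_plus_eps_eta lam_plus_id by simp
  have "lprod (Ob n) (\<lambda>_. idm C (Ob n)) (\<lambda>i. cmp C (sdeg Mor (n - 1) i) (dface Mor n (Suc i)))
        [i..<n] (b # c)
      = cmp C (Mor n n (if b then eps_eta n i else (\<lambda>v. v))) (Mor n n (p_word n (Suc i) c))"
    using Cons sdeg_dface_Suc[OF i] upt by simp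
  also have "\<dots> = Mor n n (p_word n i (b # c))"
    unfolding p_word.simps using Cons.prems by (intro Mor_comp letter lam_plus_p_word) simp
  finally show ?case .
qed simp

text \<open>The signs cancel: (-1)^(n (n + 1)) = 1 and (t - sd)^n = (-1)^n (sd - t)^n.\<close>

lemma dk_eq_power:
  fixes n :: nat
  defines "A \<equiv> Mor (Suc n) (Suc n) (eps0_eta n)" and "B \<equiv> tcyc Mor (Suc n)"
  shows "dk C Ob Mor n
    = cmp C (dface Mor (Suc n) 0) (cmp C (mpow C (Ob (Suc n)) n (mns C A B)) (sdeg Mor n (Suc n)))"
proof -
  have A: "A \<in> hom C (Ob (Suc n)) (Ob (Suc n))" and B: "B \<in> hom C (Ob (Suc n)) (Ob (Suc n))"
    unfolding A_def B_def tcyc_def by (intro Mor_closed lam_plus_eps0_eta lam_plus_tau)+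
  have d: "dface Mor (Suc n) 0 \<in> hom C (Ob (Suc n)) (Ob n)"
    unfolding dface_def using Mor_closed[OF lam_plus_eps_Suc] by simp
  have s: "sdeg Mor n (Suc n) \<in> hom C (Ob n) (Ob (Suc n))"
    unfolding sdeg_def using Mor_closed[OF lam_plus_eta_Suc] by simp
  have P: "mpow C (Ob (Suc n)) n (mns C A B) \<in> hom C (Ob (Suc n)) (Ob (Suc n))"
    using A B by auto
  have "mpow C (Ob (Suc n)) n (kar C Ob Mor (Suc n))
      = sgnm C (Suc n * n) (mpow C (Ob (Suc n)) n (mns C B A))"
    unfolding kar_Suc A_def B_def using A B by (simp add: mpow_sgnm mns_closed flip: A_def B_def)
  also have "\<dots> = mpow C (Ob (Suc n)) n (neg C (mns C A B))"
    using A B by (simp add: sgnm_def neg_mns)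
  also have "\<dots> = sgnm C n (mpow C (Ob (Suc n)) n (mns C A B))"
    using A B by (simp add: mpow_neg mns_closed)
  finally have "dk C Ob Mor n
      = sgnm C n (sgnm C n (cmp C (dface Mor (Suc n) 0)
          (cmp C (mpow C (Ob (Suc n)) n (mns C A B)) (sdeg Mor n (Suc n)))))"
    unfolding dk_def using d s P by (simp add: cmp_sgnm_left cmp_sgnm_right[OF cmp_closed[OF s P] d])
  then show ?thesis
    using sgnm_sgnm_same[OF cmp_closed[OF cmp_closed[OF s P] d]] by simp
qed

lemma dk_expand:
  "dk C Ob Mor n
    = signed_sum (Ob n) (Ob n) n (\<lambda>c. Mor n n (eta n (Suc n) \<circ> karoubi_word n c \<circ> eps (Suc n) 0))"
proof -
  let ?A = "Mor (Suc n) (Suc n) (eps0_eta n)" and ?B = "tcyc Mor (Suc n)"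
  let ?d = "Mor n (Suc n) (eps (Suc n) 0)" and ?s = "Mor (Suc n) n (eta n (Suc n))"
  let ?K = "\<lambda>c. Mor (Suc n) (Suc n) (karoubi_word n c)"
  have d: "?d \<in> hom C (Ob (Suc n)) (Ob n)" and s: "?s \<in> hom C (Ob n) (Ob (Suc n))"
    and K: "\<And>c. ?K c \<in> hom C (Ob (Suc n)) (Ob (Suc n))"
    by (intro Mor_closed lam_plus_eps_Suc lam_plus_eta_Suc lam_plus_karoubi_word)+
  have "mpow C (Ob (Suc n)) n (mns C ?A ?B) = signed_sum (Ob (Suc n)) (Ob (Suc n)) n ?K"
    unfolding tcyc_def
    by (simp add: mpow_mns_eq_signed_sum Mor_closed lam_plus_eps0_eta lam_plus_tau
        rprod_karoubi_word[unfolded tcyc_def] cong: signed_sum_cong)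
  then have "dk C Ob Mor n = cmp C ?d (cmp C (signed_sum (Ob (Suc n)) (Ob (Suc n)) n ?K) ?s)"
    by (simp add: dk_eq_power dface_def sdeg_def)
  also have "\<dots> = signed_sum (Ob n) (Ob n) n (\<lambda>c. cmp C ?d (cmp C (?K c) ?s))"
    using d s K by (simp add: cmp_signed_sum_left cmp_signed_sum_right cmp_closed)
  also have "\<dots>
      = signed_sum (Ob n) (Ob n) n (\<lambda>c. Mor n n (eta n (Suc n) \<circ> karoubi_word n c \<circ> eps (Suc n) 0))"
    using Mor_comp[OF lam_plus_karoubi_word lam_plus_eta_Suc]
      Mor_comp[OF lam_plus_eps_Suc lam_plus_comp[OF lam_plus_karoubi_word lam_plus_eta_Suc]]
    by simp
  finally show ?thesis .
qed

lemma pop_expand: "pop C Ob Mor n = signed_sum (Ob n) (Ob n) n (\<lambda>c. Mor n n (p_word n 0 c))"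
proof -
  let ?E = "\<lambda>i. cmp C (sdeg Mor (n - 1) i) (dface Mor n (Suc i))"
  have E: "?E i \<in> hom C (Ob n) (Ob n)" if "i < n" for i
    using sdeg_dface_Suc[OF that] Mor_closed[OF lam_plus_eps_eta[OF that]] by simp
  have "pop C Ob Mor n = foldr (\<lambda>i. cmp C (mns C (idm C (Ob n)) (?E i))) [0..<n] (idm C (Ob n))"
    by (simp add: pop_def pfac_def)
  also have "\<dots> = signed_sum (Ob n) (Ob n) n (lprod (Ob n) (\<lambda>_. idm C (Ob n)) ?E [0..<n])"
    using foldr_mns_eq_signed_sum[of "[0..<n]" "\<lambda>_. idm C (Ob n)"] E by simp
  also have "\<dots> = signed_sum (Ob n) (Ob n) n (\<lambda>c. Mor n n (p_word n 0 c))"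
    by (intro signed_sum_cong lprod_p_word) simp
  finally show ?thesis .
qed

lemma pop_closed: "pop C Ob Mor n \<in> hom C (Ob n) (Ob n)"
  unfolding pop_expand by (intro signed_sum_closed Mor_closed lam_plus_p_word) simp

lemma Tcyc_eq_shift: "Tcyc C Ob Mor n = Mor n n (\<lambda>v. v + int (Suc n))"
  by (simp add: Tcyc_def mpow_tcyc)

lemma dk_eq_pop_Tcyc: "dk C Ob Mor n = cmp C (pop C Ob Mor n) (Tcyc C Ob Mor n)"
proof -
  have "cmp C (pop C Ob Mor n) (Tcyc C Ob Mor n)
      = signed_sum (Ob n) (Ob n) n (\<lambda>c. cmp C (Mor n n (p_word n 0 c)) (Mor n n (\<lambda>v. v + int (Suc n))))"
    unfolding pop_expand Tcyc_eq_shift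
    by (intro cmp_signed_sum_left Mor_closed lam_plus_shift lam_plus_p_word) simp
  also have "\<dots> = signed_sum (Ob n) (Ob n) n (\<lambda>c. Mor n n ((\<lambda>v. v + int (Suc n)) \<circ> p_word n 0 c))"
    by (intro signed_sum_cong Mor_comp lam_plus_shift lam_plus_p_word) simp
  also have "\<dots> = dk C Ob Mor n"
    unfolding dk_expand by (intro signed_sum_cong) (simp add: dk_word_eq_shift_p_word)
  finally show ?thesis ..
qed

lemma Tcyc_pop_commute:
  "cmp C (Tcyc C Ob Mor n) (pop C Ob Mor n) = cmp C (pop C Ob Mor n) (Tcyc C Ob Mor n)"
proof -
  let ?T = "Mor n n (\<lambda>v. v + int (Suc n))" and ?P = "\<lambda>c. Mor n n (p_word n 0 c)"
  have commute: "cmp C ?T (?P c) = cmp C (?P c) ?T" if "length c = n" for c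
  proof -
    have p: "lam_plus n n (p_word n 0 c)"
      using that by (intro lam_plus_p_word) simp
    then have "p_word n 0 c \<circ> (\<lambda>v. v + int (Suc n)) = (\<lambda>v. v + int (Suc n)) \<circ> p_word n 0 c"
      by (intro lam_inf_comp_shift) (simp add: lam_plus_def)
    then show ?thesis
      using Mor_comp[OF lam_plus_shift[of n "Suc n"] p] Mor_comp[OF p lam_plus_shift[of n "Suc n"]]
        by simp
  qed
  have closed: "?P c \<in> hom C (Ob n) (Ob n)" if "length c = n" for c
    using that by (intro Mor_closed lam_plus_p_word) simp
  have T: "?T \<in> hom C (Ob n) (Ob n)"
    by (intro Mor_closed lam_plus_shift)
  have "cmp C ?T (pop C Ob Mor n) = signed_sum (Ob n) (Ob n) n (\<lambda>c. cmp C ?T (?P c))"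
    unfolding pop_expand using T closed by (rule cmp_signed_sum_right)
  also have "\<dots> = signed_sum (Ob n) (Ob n) n (\<lambda>c. cmp C (?P c) ?T)"
    using commute by (rule signed_sum_cong)
  also have "\<dots> = cmp C (pop C Ob Mor n) ?T"
    unfolding pop_expand using T closed by (rule cmp_signed_sum_left[symmetric])
  finally show ?thesis
    by (simp only: Tcyc_eq_shift)
qed

end

theorem mainTheorem2:
  fixes C :: "('o, 'm) preadd_cat"
    and Ob :: "nat \<Rightarrow> 'o"
    and Mor :: "nat \<Rightarrow> nat \<Rightarrow> (int \<Rightarrow> int) \<Rightarrow> 'm"
  assumes "preadditive C"
    and "duplicial C Ob Mor"
  shows "(\<forall>n. dk C Ob Mor n = cmp C (pop C Ob Mor n) (Tcyc C Ob Mor n)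
            \<and> dk C Ob Mor n = cmp C (Tcyc C Ob Mor n) (pop C Ob Mor n))
         \<and> (cyclic C Ob Mor \<longrightarrow> (\<forall>n. dk C Ob Mor n = pop C Ob Mor n))"
proof -
  interpret duplicial_module C Ob Mor
    using assms by unfold_locales
  have "dk C Ob Mor n = cmp C (pop C Ob Mor n) (Tcyc C Ob Mor n)
      \<and> dk C Ob Mor n = cmp C (Tcyc C Ob Mor n) (pop C Ob Mor n)" for n
    using dk_eq_pop_Tcyc Tcyc_pop_commute by simp
  moreover have "dk C Ob Mor n = pop C Ob Mor n" if "cyclic C Ob Mor" for n
    using that dk_eq_pop_Tcyc idm_right[OF pop_closed] by (simp add: cyclic_def)
  ultimately show ?thesis
    by blast
qed

end
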